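(* Let $C$ be a configuration of a finite labeled prime event structure and let $e_1,e_2\in C$ be concurrent events. Then $T(C)=T(C_{e_1<e_2})\cup T(C_{e_2<e_1})$ and $T(C_{e_1<e_2})\cap T(C_{e_2<e_1})=\emptyset$.
   Context: A finite labeled prime event structure is $\langle E,<,\#,h\rangle$ with finite $E$, strict partial order $<$ (causality), labeling $h$, and symmetric irreflexive conflict relation $\#$ closed under $<$. A configuration is a left-closed, conflict-free subset of $E$. Events $e,e'$ are concurrent if $e\neq e'$, neither $e<e'$ nor $e'<e$, and not $e\#e'$. $T(C)$ is the set of traces of $C$: sequences in which every event of $C$ occurs exactly once and $e_i<e_j$ implies $i<j$. The split $C_{e_1<e_2}$ is the structure with event set $C$, causality $(<\cup\{(e_1,e_2)\})^+$ restricted to $C\times C$ ($^+$ denoting transitive closure), no conflicts, and labeling $h|_C$; $T(C_{e_1<e_2})$ is the set of sequences listing every event of $C$ exactly once and respecting this enlarged causality. *)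

theory Defs
  imports Main
begin

definition les :: "'a set \<Rightarrow> ('a \<times> 'a) set \<Rightarrow> ('a \<times> 'a) set \<Rightarrow> ('a \<Rightarrow> 'l) \<Rightarrow> bool" where
  "les E lt cf h \<longleftrightarrow>
     finite E \<and> lt \<subseteq> E \<times> E \<and> cf \<subseteq> E \<times> E \<and>
     irrefl lt \<and> trans lt \<and>
     sym cf \<and> irrefl cf \<and>
     (\<forall>e1 e2 e3. (e1, e2) \<in> cf \<and> (e2, e3) \<in> lt \<longrightarrow> (e1, e3) \<in> cf)"

definition configuration :: "'a set \<Rightarrow> ('a \<times> 'a) set \<Rightarrow> ('a \<times> 'a) set \<Rightarrow> 'a set \<Rightarrow> bool" where
  "configuration E lt cf C \<longleftrightarrow>
     C \<subseteq> E \<and>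
     (\<forall>e\<in>C. \<forall>e'. (e', e) \<in> lt \<longrightarrow> e' \<in> C) \<and>
     (\<forall>e\<in>C. \<forall>e'\<in>C. (e, e') \<notin> cf)"

definition concurrent :: "('a \<times> 'a) set \<Rightarrow> ('a \<times> 'a) set \<Rightarrow> 'a \<Rightarrow> 'a \<Rightarrow> bool" where
  "concurrent lt cf e e' \<longleftrightarrow>
     e \<noteq> e' \<and> (e, e') \<notin> lt \<and> (e', e) \<notin> lt \<and> (e, e') \<notin> cf"

definition traces :: "('a \<times> 'a) set \<Rightarrow> 'a set \<Rightarrow> 'a list set" where
  "traces lt C = {w. distinct w \<and> set w = C \<and>
     (\<forall>i j. i < length w \<and> j < length w \<and> (w ! i, w ! j) \<in> lt \<longrightarrow> i < j)}"

text \<open>Causality of the split C_{e1<e2}.\<close>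
definition split_order :: "('a \<times> 'a) set \<Rightarrow> 'a set \<Rightarrow> 'a \<Rightarrow> 'a \<Rightarrow> ('a \<times> 'a) set" where
  "split_order lt C e1 e2 = (lt \<union> {(e1, e2)})\<^sup>+ \<inter> (C \<times> C)"

end

theory Submission
  imports Defs
begin

text \<open>A list is a trace of \<open>C\<close> for a causality relation \<open>r\<close> iff it enumerates \<open>C\<close> without
  repetition and its position order contains every \<open>r\<close>-pair inside \<open>C\<close>. The position order of a
  distinct list is transitive, and since \<open>C\<close> is left-closed every \<open>r\<^sup>+\<close>-path ending in \<open>C\<close> stays
  inside \<open>C\<close>; so \<open>r\<close> and \<open>r\<^sup>+\<close> have the same traces. Hence the traces of the split with
  \<open>e\<^sub>1 < e\<^sub>2\<close> are exactly the traces of \<open>C\<close> listing \<open>e\<^sub>1\<close> before \<open>e\<^sub>2\<close>, and every trace lists exactly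
  one of the distinct events \<open>e\<^sub>1\<close>, \<open>e\<^sub>2\<close> first.\<close>

definition occurs_before :: "'a list \<Rightarrow> ('a \<times> 'a) set" where
  "occurs_before w = {(w ! i, w ! j) | i j. i < j \<and> j < length w}"

lemma occurs_beforeI:
  assumes "i < j" "j < length w"
  shows "(w ! i, w ! j) \<in> occurs_before w"
  using assms unfolding occurs_before_def by blast

lemma occurs_beforeE:
  assumes "(x, y) \<in> occurs_before w"
  obtains i j where "x = w ! i" "y = w ! j" "i < j" "j < length w"
  using assms unfolding occurs_before_def by blast

lemma occurs_before_nth_iff:
  assumes "distinct w" "i < length w" "j < length w"
  shows "(w ! i, w ! j) \<in> occurs_before w \<longleftrightarrow> i < j"
proof
  assume "(w ! i, w ! j) \<in> occurs_before w"
  then obtain i' j' where "w ! i = w ! i'" "w ! j = w ! j'" "i' < j'" "j' < length w"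
    by (rule occurs_beforeE)
  with assms show "i < j"
    by (simp add: nth_eq_iff_index_eq)
next
  assume "i < j"
  then show "(w ! i, w ! j) \<in> occurs_before w"
    using assms(3) by (rule occurs_beforeI)
qed

lemma trans_occurs_before:
  assumes "distinct w"
  shows "trans (occurs_before w)"
proof (rule transI)
  fix x y z
  assume "(x, y) \<in> occurs_before w"
  then obtain i j where x: "x = w ! i" and y: "y = w ! j" and "i < j" "j < length w"
    by (rule occurs_beforeE)
  assume "(y, z) \<in> occurs_before w"
  with y \<open>j < length w\<close> assms obtain k where z: "z = w ! k" "j < k" "k < length w"
    by (metis occurs_beforeE occurs_before_nth_iff)
  from \<open>i < j\<close> z have "(w ! i, w ! k) \<in> occurs_before w"
    by (simp add: occurs_beforeI)
  with x z show "(x, z) \<in> occurs_before w"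
    by simp
qed

lemma occurs_before_asym:
  assumes "distinct w" "(x, y) \<in> occurs_before w"
  shows "(y, x) \<notin> occurs_before w"
proof
  assume "(y, x) \<in> occurs_before w"
  from assms(2) obtain i j where "x = w ! i" "y = w ! j" "i < j" "j < length w"
    by (rule occurs_beforeE)
  with assms(1) \<open>(y, x) \<in> occurs_before w\<close> show False
    by (simp add: occurs_before_nth_iff)
qed

lemma occurs_before_total:
  assumes "x \<in> set w" "y \<in> set w" "x \<noteq> y"
  shows "(x, y) \<in> occurs_before w \<or> (y, x) \<in> occurs_before w"
proof -
  obtain i j where "i < length w" "j < length w" "x = w ! i" "y = w ! j"
    using assms(1,2) by (metis in_set_conv_nth)
  moreover from calculation assms(3) have "i < j \<or> j < i"
    by (cases i j rule: linorder_cases) auto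
  ultimately show ?thesis
    by (auto intro: occurs_beforeI)
qed

lemma traces_iff_occurs_before:
  "w \<in> traces r C \<longleftrightarrow> distinct w \<and> set w = C \<and> Restr r C \<subseteq> occurs_before w"
proof
  assume w: "w \<in> traces r C"
  have "(x, y) \<in> occurs_before w" if xy: "(x, y) \<in> r" "x \<in> set w" "y \<in> set w" for x y
  proof -
    obtain i j where "i < length w" "j < length w" "w ! i = x" "w ! j = y"
      using xy(2,3) by (metis in_set_conv_nth)
    with w xy(1) show ?thesis by (auto simp: traces_def occurs_before_def)
  qed
  with w show "distinct w \<and> set w = C \<and> Restr r C \<subseteq> occurs_before w"
    by (auto simp: traces_def)
next
  assume w: "distinct w \<and> set w = C \<and> Restr r C \<subseteq> occurs_before w"
  have "i < j" if "i < length w" "j < length w" "(w ! i, w ! j) \<in> r" for i j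
  proof -
    from that w have "(w ! i, w ! j) \<in> occurs_before w"
      by auto
    with that(1,2) w show ?thesis
      by (simp add: occurs_before_nth_iff)
  qed
  with w show "w \<in> traces r C"
    by (simp add: traces_def)
qed

lemma traces_Restr: "traces (Restr r C) C = traces r C"
proof -
  have "Restr (Restr r C) C = Restr r C"
    by blast
  then have "w \<in> traces (Restr r C) C \<longleftrightarrow> w \<in> traces r C" for w
    unfolding traces_iff_occurs_before by simp
  then show ?thesis
    by blast
qed

lemma trancl_in_trancl_Restr:
  assumes closed: "\<And>x y. (x, y) \<in> r \<Longrightarrow> y \<in> C \<Longrightarrow> x \<in> C"
    and "(x, y) \<in> r\<^sup>+" "y \<in> C"
  shows "(x, y) \<in> (Restr r C)\<^sup>+"
  using assms(2,3)
proof (induction rule: trancl_induct)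
  case (base y)
  then show ?case using closed by blast
next
  case (step y z)
  then have "y \<in> C"
    using closed by blast
  with step have "(x, y) \<in> (Restr r C)\<^sup>+" "(y, z) \<in> Restr r C"
    by blast+
  then show ?case
    by (rule trancl_into_trancl)
qed

lemma traces_trancl:
  assumes closed: "\<And>x y. (x, y) \<in> r \<Longrightarrow> y \<in> C \<Longrightarrow> x \<in> C"
  shows "traces (r\<^sup>+) C = traces r C"
proof (intro set_eqI iffI)
  fix w
  assume "w \<in> traces (r\<^sup>+) C"
  then have "distinct w" "set w = C" "Restr (r\<^sup>+) C \<subseteq> occurs_before w"
    unfolding traces_iff_occurs_before by blast+
  moreover have "Restr r C \<subseteq> Restr (r\<^sup>+) C"
    using r_into_trancl' by blast
  ultimately show "w \<in> traces r C"
    unfolding traces_iff_occurs_before by blast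
next
  fix w
  assume "w \<in> traces r C"
  then have w: "distinct w" "set w = C" "Restr r C \<subseteq> occurs_before w"
    unfolding traces_iff_occurs_before by blast+
  have "Restr (r\<^sup>+) C \<subseteq> (Restr r C)\<^sup>+"
    using trancl_in_trancl_Restr[OF closed] by auto
  also have "\<dots> \<subseteq> (occurs_before w)\<^sup>+"
    using w(3) by (rule trancl_mono_subset)
  also have "\<dots> = occurs_before w"
    using trans_occurs_before[OF w(1)] by (rule trancl_id)
  finally show "w \<in> traces (r\<^sup>+) C"
    using w(1,2) unfolding traces_iff_occurs_before by blast
qed

lemma traces_insert:
  assumes "x \<in> C" "y \<in> C"
  shows "traces (insert (x, y) r) C = {w \<in> traces r C. (x, y) \<in> occurs_before w}"
proof -
  have Restr_insert: "Restr (insert (x, y) r) C = insert (x, y) (Restr r C)"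
    using assms by blast
  have "w \<in> traces (insert (x, y) r) C \<longleftrightarrow> w \<in> traces r C \<and> (x, y) \<in> occurs_before w" for w
    unfolding traces_iff_occurs_before Restr_insert insert_subset by blast
  then show ?thesis
    by blast
qed

lemma traces_split_order:
  assumes closed: "\<And>x y. (x, y) \<in> lt \<Longrightarrow> y \<in> C \<Longrightarrow> x \<in> C"
    and "e1 \<in> C" "e2 \<in> C"
  shows "traces (split_order lt C e1 e2) C = {w \<in> traces lt C. (e1, e2) \<in> occurs_before w}"
proof -
  have "traces (split_order lt C e1 e2) C = traces ((insert (e1, e2) lt)\<^sup>+) C"
    unfolding split_order_def traces_Restr by simp
  also have "\<dots> = traces (insert (e1, e2) lt) C"
    using closed \<open>e1 \<in> C\<close> by (intro traces_trancl) auto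
  also have "\<dots> = {w \<in> traces lt C. (e1, e2) \<in> occurs_before w}"
    using assms(2,3) by (rule traces_insert)
  finally show ?thesis .
qed

theorem lemma11:
  fixes E :: "'a set" and lt cf :: "('a \<times> 'a) set" and h :: "'a \<Rightarrow> 'l"
    and C :: "'a set" and e1 e2 :: 'a
  assumes "les E lt cf h"
    and "configuration E lt cf C"
    and "e1 \<in> C" and "e2 \<in> C"
    and "concurrent lt cf e1 e2"
  shows "traces lt C = traces (split_order lt C e1 e2) C \<union> traces (split_order lt C e2 e1) C
     \<and> traces (split_order lt C e1 e2) C \<inter> traces (split_order lt C e2 e1) C = {}"
proof -
  have closed: "\<And>x y. (x, y) \<in> lt \<Longrightarrow> y \<in> C \<Longrightarrow> x \<in> C"
    using assms(2) by (auto simp: configuration_def)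
  have "e1 \<noteq> e2"
    using assms(5) by (simp add: concurrent_def)
  have ordered: "(e1, e2) \<in> occurs_before w \<or> (e2, e1) \<in> occurs_before w"
    and exclusive: "(e1, e2) \<in> occurs_before w \<Longrightarrow> (e2, e1) \<notin> occurs_before w"
    if "w \<in> traces lt C" for w
  proof -
    from that assms(3,4) have "distinct w" "e1 \<in> set w" "e2 \<in> set w"
      by (simp_all add: traces_def)
    with \<open>e1 \<noteq> e2\<close> show "(e1, e2) \<in> occurs_before w \<or> (e2, e1) \<in> occurs_before w"
      and "(e1, e2) \<in> occurs_before w \<Longrightarrow> (e2, e1) \<notin> occurs_before w"
      by (simp_all add: occurs_before_total occurs_before_asym)
  qed
  have "traces (split_order lt C e1 e2) C = {w \<in> traces lt C. (e1, e2) \<in> occurs_before w}"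
    and "traces (split_order lt C e2 e1) C = {w \<in> traces lt C. (e2, e1) \<in> occurs_before w}"
    using assms(3,4) by (simp_all add: traces_split_order closed)
  with ordered exclusive show ?thesis
    by auto
qed

end
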